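(* Let $k>0$, $M>0$, $\beta\in\,]0,\tfrac12[$, and let $f\ge0$ be spherically symmetric with $f\in\tilde{\mathcal A}_{M,\beta}$. Then there is a spherically symmetric function $\hat f\ge0$ such that $\rho_{\hat f}=\rho_f$ (in particular $\hat f\in\tilde{\mathcal A}_{M,\beta}$), $\mathcal D(\hat f)\le\mathcal D(f)$, and $\hat f(x,v)\le1$ for all $(x,v)\in\mathbb R^3\times\mathbb R^3$.
   Context: Let $\chi(s)=\frac{k}{k+1}s^{1+1/k}$. A measurable $f\ge0$ on $\mathbb R^3\times\mathbb R^3$ is spherically symmetric if $f(Ax,Av)=f(x,v)$ for all $A\in SO(3)$. For such $f$: $\rho_f(x)=\int\sqrt{1+|v|^2}f(x,v)\,dv$ (radial, written $\rho_f(r)$), $m_f(r)=\int_{|x|\le r}\int\sqrt{1+|v|^2}f\,dx\,dv$, $\lambda_f$ given by $e^{-2\lambda_f(r)}=1-2m_f(r)/r$, and $\mathcal D(f)=\int\int e^{\lambda_f(|x|)}(\chi(f)-f)\,dx\,dv$. $\tilde{\mathcal A}_{M,\beta}$ is the set of measurable spherically symmetric $f\ge0$ with $\int\int\sqrt{1+|v|^2}f\,dx\,dv=M$, $m_f(r)/r\le\beta$ for $r\in\,]0,\infty[$, and $\rho_f(r)\le1$ for $r\in[0,\infty[$. *)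

theory Defs
  imports "HOL-Analysis.Analysis"
begin

definition chi :: "real \<Rightarrow> real \<Rightarrow> real" where
  "chi k s = k / (k + 1) * s powr (1 + 1 / k)"

definition sph_sym :: "(real^3 \<Rightarrow> real^3 \<Rightarrow> real) \<Rightarrow> bool" where
  "sph_sym f \<longleftrightarrow> (\<forall>A :: real^3^3. orthogonal_matrix A \<and> det A = 1 \<longrightarrow>
      (\<forall>x v. f (A *v x) (A *v v) = f x v))"

definition meas_density :: "(real^3 \<Rightarrow> real^3 \<Rightarrow> real) \<Rightarrow> bool" where
  "meas_density f \<longleftrightarrow> (\<lambda>z :: (real^3) \<times> (real^3). f (fst z) (snd z)) \<in> borel_measurable lebesgue"

definition rho :: "(real^3 \<Rightarrow> real^3 \<Rightarrow> real) \<Rightarrow> real^3 \<Rightarrow> ennreal" where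
  "rho f x = (\<integral>\<^sup>+ v. ennreal (sqrt (1 + (norm v)\<^sup>2) * f x v) \<partial>lebesgue)"

definition mass_in :: "(real^3 \<Rightarrow> real^3 \<Rightarrow> real) \<Rightarrow> real \<Rightarrow> ennreal" where
  "mass_in f r = (\<integral>\<^sup>+ z. ennreal (sqrt (1 + (norm (snd z))\<^sup>2) * f (fst z) (snd z))
       * indicator (cball 0 r) (fst z) \<partial>(lebesgue :: ((real^3) \<times> (real^3)) measure))"

definition total_mass :: "(real^3 \<Rightarrow> real^3 \<Rightarrow> real) \<Rightarrow> ennreal" where
  "total_mass f = (\<integral>\<^sup>+ z. ennreal (sqrt (1 + (norm (snd z))\<^sup>2) * f (fst z) (snd z))
       \<partial>(lebesgue :: ((real^3) \<times> (real^3)) measure))"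

text \<open>e^{lambda_f(r)} where e^{-2 lambda_f(r)} = 1 - 2 m_f(r)/r; at r = 0 we take lambda = 0.\<close>
definition exp_lambda :: "(real^3 \<Rightarrow> real^3 \<Rightarrow> real) \<Rightarrow> real \<Rightarrow> real" where
  "exp_lambda f r = (if r = 0 then 1 else 1 / sqrt (1 - 2 * enn2real (mass_in f r) / r))"

text \<open>D(f) = \<integral>\<integral> e^lambda chi(f) - \<integral>\<integral> e^lambda f, as an extended real
  (the second integral is finite on the admissible set).\<close>
definition Dfun :: "real \<Rightarrow> (real^3 \<Rightarrow> real^3 \<Rightarrow> real) \<Rightarrow> ereal" where
  "Dfun k f =
     enn2ereal (\<integral>\<^sup>+ z. ennreal (exp_lambda f (norm (fst z)) * chi k (f (fst z) (snd z)))
        \<partial>(lebesgue :: ((real^3) \<times> (real^3)) measure))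
   - enn2ereal (\<integral>\<^sup>+ z. ennreal (exp_lambda f (norm (fst z)) * f (fst z) (snd z))
        \<partial>(lebesgue :: ((real^3) \<times> (real^3)) measure))"

definition A_tilde :: "real \<Rightarrow> real \<Rightarrow> (real^3 \<Rightarrow> real^3 \<Rightarrow> real) set" where
  "A_tilde M \<beta> = {f. meas_density f \<and> sph_sym f \<and> (\<forall>x v. 0 \<le> f x v) \<and>
      total_mass f = ennreal M \<and>
      (\<forall>r>0. mass_in f r \<le> ennreal (\<beta> * r)) \<and>
      (\<forall>x. rho f x \<le> 1)}"

end

theory Submission
  imports Defs
begin

text \<open>Since \<open>chi k\<close> has derivative \<open>s powr (1/k)\<close>, for \<open>a > 0\<close> the convex function
  \<open>s \<mapsto> chi k s - s + a * s\<close> on \<open>[0, \<infinity>)\<close> is minimal at \<open>t = (max 0 (1 - a)) powr k\<close>. Taking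
  \<open>a = c x * sqrt (1 + |v|^2)\<close>, the profile \<open>fh x v = (max 0 (1 - c x * sqrt (1 + |v|^2))) powr k\<close>
  is bounded by 1, and \<open>c x\<close> can be chosen measurably and rotation invariantly so that
  \<open>rho fh x = rho f x\<close>, because the density of the profile decreases continuously in \<open>c\<close> from
  a value at least 1 to 0. Equal \<open>rho\<close> gives equal masses, hence equal \<open>lambda\<close> and membership in
  the admissible set. Integrating the pointwise inequality against \<open>e^lambda\<close>, the terms
  \<open>a * fh\<close> and \<open>a * f\<close> both integrate to the finite quantity \<open>\<integral> e^lambda c rho_f\<close> and cancel,
  which leaves \<open>D(fh) \<le> D(f)\<close>.\<close>

section \<open>Lebesgue measure on products and under orthogonal maps\<close>

lemma measurable_completion_AE:
  assumes g: "g \<in> M \<rightarrow>\<^sub>M N" and ae: "AE x in M. f x = g x"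
    and space: "\<And>x. x \<in> space M \<Longrightarrow> f x \<in> space N"
  shows "f \<in> completion M \<rightarrow>\<^sub>M N"
proof (rule measurableI)
  show "x \<in> space (completion M) \<Longrightarrow> f x \<in> space N" for x
    using space by simp
  fix A assume A: "A \<in> sets N"
  show "f -` A \<inter> space (completion M) \<in> sets (completion M)"
  proof (rule completion.in_sets_AE[where A = "g -` A \<inter> space M"])
    show "AE x in completion M. (x \<in> g -` A \<inter> space M) = (x \<in> f -` A \<inter> space (completion M))"
      using AE_completion[OF ae] by (rule AE_mp) (auto intro!: AE_I2)
    show "g -` A \<inter> space M \<in> sets (completion M)"
      using measurable_sets[OF g A] by simp
  qed auto
qed

lemma measurable_fst_lebesgue_borel[measurable]:
  "fst \<in> (lebesgue :: ('a::euclidean_space \<times> 'b::euclidean_space) measure) \<rightarrow>\<^sub>M borel"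
  by (intro measurable_completion) (simp add: borel_measurable_continuous_onI continuous_on_fst)

lemma measurable_snd_lebesgue_borel[measurable]:
  "snd \<in> (lebesgue :: ('a::euclidean_space \<times> 'b::euclidean_space) measure) \<rightarrow>\<^sub>M borel"
  by (intro measurable_completion) (simp add: borel_measurable_continuous_onI continuous_on_snd)

lemma measurable_fst_lebesgue:
  "fst \<in> (lebesgue :: ('a::euclidean_space \<times> 'b::euclidean_space) measure) \<rightarrow>\<^sub>M lebesgue"
proof (rule completion.measurable_completion2)
  have "fst \<in> (lborel \<Otimes>\<^sub>M lborel :: ('a \<times> 'b) measure) \<rightarrow>\<^sub>M lborel"
    by (rule measurable_fst)
  then show "fst \<in> (lebesgue :: ('a \<times> 'b) measure) \<rightarrow>\<^sub>M lborel"
    by (intro measurable_completion) (simp add: lborel_prod)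
  show "null_sets lborel \<subseteq> null_sets (distr lebesgue lborel (fst :: 'a \<times> 'b \<Rightarrow> 'a))"
  proof
    fix N :: "'a set" assume N: "N \<in> null_sets lborel"
    have "N \<times> (UNIV :: 'b set) \<in> sets (lborel \<Otimes>\<^sub>M lborel)"
      using N by (intro pair_measureI) auto
    then have "N \<times> (UNIV :: 'b set) \<in> sets lborel"
      by (simp only: lborel_prod)
    have "emeasure (distr lebesgue lborel (fst :: 'a \<times> 'b \<Rightarrow> 'a)) N = emeasure lebesgue (N \<times> (UNIV :: 'b set))"
      using N \<open>fst \<in> lebesgue \<rightarrow>\<^sub>M lborel\<close> by (subst emeasure_distr) (auto simp: vimage_fst)
    also have "emeasure lebesgue (N \<times> (UNIV :: 'b set)) = emeasure lborel (N \<times> (UNIV :: 'b set))"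
      using \<open>N \<times> UNIV \<in> sets lborel\<close> by simp
    also have "\<dots> = emeasure (lborel \<Otimes>\<^sub>M lborel) (N \<times> (UNIV :: 'b set))"
      by (simp only: lborel_prod)
    also have "\<dots> = 0"
      using N by (subst lborel.emeasure_pair_measure_Times) (auto simp: null_sets_def)
    finally show "N \<in> null_sets (distr lebesgue lborel (fst :: 'a \<times> 'b \<Rightarrow> 'a))"
      using N by (simp add: null_sets_def)
  qed
qed

lemma lebesgue_pair_borel_representative:
  fixes F :: "'a::euclidean_space \<times> 'b::euclidean_space \<Rightarrow> ennreal"
  assumes "F \<in> borel_measurable lebesgue"
  obtains G where "G \<in> borel_measurable (lborel \<Otimes>\<^sub>M lborel)"
    and "AE z in lborel. F z = G z"
    and "AE x in lborel. AE v in lborel. F (x, v) = G (x, v)"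
proof -
  obtain G where G: "G \<in> borel_measurable lborel" "AE z in lborel. F z = G z"
    using completion_ex_borel_measurable[OF assms] by auto
  have "AE z in lborel \<Otimes>\<^sub>M lborel. F z = G z"
    using G(2) by (simp only: lborel_prod)
  from lborel_pair.AE_pair[OF this]
  have "AE x in lborel. AE v in lborel. F (x, v) = G (x, v)"
    by simp
  moreover have "G \<in> borel_measurable (lborel \<Otimes>\<^sub>M lborel)"
    using G(1) by (simp add: lborel_prod)
  ultimately show thesis
    using that G(2) by blast
qed

lemma nn_integral_lebesgue_pair:
  fixes F :: "'a::euclidean_space \<times> 'b::euclidean_space \<Rightarrow> ennreal"
  assumes F: "F \<in> borel_measurable lebesgue"
  shows "(\<integral>\<^sup>+z. F z \<partial>lebesgue) = (\<integral>\<^sup>+x. (\<integral>\<^sup>+v. F (x, v) \<partial>lebesgue) \<partial>lebesgue)"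
    and "(\<lambda>x. \<integral>\<^sup>+v. F (x, v) \<partial>lebesgue) \<in> borel_measurable lebesgue"
proof -
  obtain G where G: "G \<in> borel_measurable (lborel \<Otimes>\<^sub>M lborel)" "AE z in lborel. F z = G z"
    and sections: "AE x in lborel. AE v in lborel. F (x, v) = G (x, v)"
    using lebesgue_pair_borel_representative[OF F] by blast
  have inner: "AE x in lborel. (\<integral>\<^sup>+v. F (x, v) \<partial>lebesgue) = (\<integral>\<^sup>+v. G (x, v) \<partial>lborel)"
    using sections by eventually_elim (simp add: nn_integral_completion cong: nn_integral_cong_AE)
  have "(\<integral>\<^sup>+z. F z \<partial>lebesgue) = (\<integral>\<^sup>+z. G z \<partial>lborel)"
    using G(2) by (simp add: nn_integral_completion cong: nn_integral_cong_AE)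
  also have "\<dots> = (\<integral>\<^sup>+z. G z \<partial>(lborel \<Otimes>\<^sub>M lborel))"
    by (simp add: lborel_prod)
  also have "\<dots> = (\<integral>\<^sup>+x. (\<integral>\<^sup>+v. G (x, v) \<partial>lborel) \<partial>lborel)"
    using lborel.nn_integral_fst[OF G(1)] by simp
  also have "\<dots> = (\<integral>\<^sup>+x. (\<integral>\<^sup>+v. F (x, v) \<partial>lebesgue) \<partial>lebesgue)"
    using inner by (simp add: nn_integral_completion cong: nn_integral_cong_AE)
  finally show "(\<integral>\<^sup>+z. F z \<partial>lebesgue) = (\<integral>\<^sup>+x. (\<integral>\<^sup>+v. F (x, v) \<partial>lebesgue) \<partial>lebesgue)" .
  have "(\<lambda>x. \<integral>\<^sup>+v. G (x, v) \<partial>lborel) \<in> borel_measurable lborel"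
    using lborel.borel_measurable_nn_integral_fst[OF G(1)] by simp
  then show "(\<lambda>x. \<integral>\<^sup>+v. F (x, v) \<partial>lebesgue) \<in> borel_measurable lebesgue"
    using inner by (rule measurable_completion_AE) auto
qed

lemma AE_measurable_section_lebesgue:
  fixes F :: "'a::euclidean_space \<times> 'b::euclidean_space \<Rightarrow> ennreal"
  assumes F: "F \<in> borel_measurable lebesgue"
  shows "AE x in lebesgue. (\<lambda>v. F (x, v)) \<in> borel_measurable lebesgue"
proof -
  obtain G where G: "G \<in> borel_measurable (lborel \<Otimes>\<^sub>M lborel)"
    and sections: "AE x in lborel. AE v in lborel. F (x, v) = G (x, v)"
    using lebesgue_pair_borel_representative[OF F] by blast
  have "AE x in lborel. (\<lambda>v. F (x, v)) \<in> borel_measurable lebesgue"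
    using sections
  proof eventually_elim
    case (elim x)
    have "(\<lambda>v. G (x, v)) \<in> borel_measurable lborel"
      using G by (rule measurable_Pair2) simp
    then show ?case
      using elim by (rule measurable_completion_AE) auto
  qed
  then show ?thesis
    by (rule AE_completion)
qed

lemma nn_integral_le_nn_integral_comp_measure_preserving:
  assumes T: "T \<in> M \<rightarrow>\<^sub>M M" and preserving: "distr M M T = M"
  shows "(\<integral>\<^sup>+x. g x \<partial>M) \<le> (\<integral>\<^sup>+x. g (T x) \<partial>M)"
  unfolding nn_integral_def[of M g]
proof (rule SUP_least)
  fix s assume s: "s \<in> {s. simple_function M s \<and> s \<le> g}"
  then have s_meas: "s \<in> borel_measurable M"
    by (auto intro: borel_measurable_simple_function)
  have "integral\<^sup>S M s = (\<integral>\<^sup>+x. s x \<partial>M)"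
    using s by (simp add: nn_integral_eq_simple_integral)
  also have "\<dots> = (\<integral>\<^sup>+x. s x \<partial>distr M M T)"
    by (simp only: preserving)
  also have "\<dots> = (\<integral>\<^sup>+x. s (T x) \<partial>M)"
    by (rule nn_integral_distr[OF T]) (simp add: s_meas)
  also have "\<dots> \<le> (\<integral>\<^sup>+x. g (T x) \<partial>M)"
    using s by (intro nn_integral_mono) (auto simp: le_fun_def)
  finally show "integral\<^sup>S M s \<le> (\<integral>\<^sup>+x. g (T x) \<partial>M)" .
qed

lemma lborel_distr_orthogonal_transformation:
  fixes T :: "real^'n::{finite,wellorder} \<Rightarrow> real^'n::_"
  assumes T: "orthogonal_transformation T"
  shows "distr lborel lborel T = lborel"
proof (rule lborel_eqI[symmetric])
  have T_meas: "T \<in> borel_measurable borel"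
    using T by (intro borel_measurable_continuous_onI linear_continuous_on)
      (simp add: orthogonal_transformation_def linear_conv_bounded_linear)
  fix l u :: "real^'n::_" assume le: "\<And>b. b \<in> Basis \<Longrightarrow> l \<bullet> b \<le> u \<bullet> b"
  have T_inv: "orthogonal_transformation (inv T)"
    using T by (rule orthogonal_transformation_inv)
  have vimage: "T -` box l u = inv T ` box l u"
    using orthogonal_transformation_bij[OF T] by (rule bij_vimage_eq_inv_image)
  have "inv T ` box l u \<in> sets lborel"
    unfolding vimage[symmetric] using T_meas by (simp add: measurable_sets_borel)
  then have "emeasure (distr lborel lborel T) (box l u) = emeasure lebesgue (inv T ` box l u)"
    using T_meas by (simp add: emeasure_distr vimage)
  also have "\<dots> = emeasure lebesgue (box l u)"
    using measurable_orthogonal_image[OF T_inv lmeasurable_box]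
      measure_orthogonal_image[OF T_inv lmeasurable_box]
    by (simp add: emeasure_eq_measure2)
  also have "\<dots> = (\<Prod>b\<in>Basis. (u - l) \<bullet> b)"
    using le by simp
  finally show "emeasure (distr lborel lborel T) (box l u) = (\<Prod>b\<in>Basis. (u - l) \<bullet> b)" .
qed simp

lemma nn_integral_lebesgue_orthogonal_transformation:
  fixes T :: "real^'n::{finite,wellorder} \<Rightarrow> real^'n::_" and g :: "real^'n::_ \<Rightarrow> ennreal"
  assumes T: "orthogonal_transformation T"
  shows "(\<integral>\<^sup>+v. g (T v) \<partial>lebesgue) = (\<integral>\<^sup>+v. g v \<partial>lebesgue)"
proof -
  have S_meas: "S \<in> lborel \<rightarrow>\<^sub>M lborel"
    if "orthogonal_transformation S" for S :: "real^'n::_ \<Rightarrow> real^'n::_"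
    using that by (simp, intro borel_measurable_continuous_onI linear_continuous_on)
      (simp add: orthogonal_transformation_def linear_conv_bounded_linear)
  have T_inv: "orthogonal_transformation (inv T)"
    using T by (rule orthogonal_transformation_inv)
  have "(\<integral>\<^sup>+v. g (T v) \<partial>lborel) \<le> (\<integral>\<^sup>+v. g (T (inv T v)) \<partial>lborel)"
    using nn_integral_le_nn_integral_comp_measure_preserving[OF S_meas[OF T_inv]]
      lborel_distr_orthogonal_transformation[OF T_inv] by blast
  also have "\<dots> = (\<integral>\<^sup>+v. g v \<partial>lborel)"
    using orthogonal_transformation_bij[OF T] by (simp add: bij_is_surj surj_f_inv_f)
  finally show ?thesis
    using nn_integral_le_nn_integral_comp_measure_preserving[OF S_meas[OF T]
        lborel_distr_orthogonal_transformation[OF T], of g]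
    by (simp add: nn_integral_completion)
qed

section \<open>The pointwise minimiser\<close>

lemma chi_nonneg: "0 \<le> k \<Longrightarrow> 0 \<le> chi k s"
  unfolding chi_def by simp

lemma borel_measurable_chi[measurable]: "chi k \<in> borel_measurable borel"
  unfolding chi_def by measurable

text \<open>The minimality of \<open>t\<close>, which is Young's inequality, with the subtractions moved across.\<close>
lemma chi_profile_le:
  fixes k s a :: real
  defines "t \<equiv> (max 0 (1 - a)) powr k"
  assumes k: "0 < k" and s: "0 \<le> s" and a: "0 < a"
  shows "chi k t + s + a * t \<le> chi k s + t + a * s"
proof (cases "1 \<le> a")
  case True
  then have "t = 0" "chi k t = 0" "s \<le> a * s"
    using s by (auto simp: t_def chi_def intro: mult_right_mono[of 1 a s, simplified])
  then show ?thesis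
    using chi_nonneg[of k s] k by simp
next
  case False
  define b where "b = 1 - a"
  have b: "0 < b" and t: "t = b powr k"
    using False by (auto simp: b_def t_def)
  have "s * b \<le> s powr (1 + 1/k) / (1 + 1/k) + b powr (k + 1) / (k + 1)"
    by (rule Youngs_inequality) (use k s b in \<open>auto simp: field_simps\<close>)
  also have "s powr (1 + 1/k) / (1 + 1/k) = chi k s"
    unfolding chi_def using k by (simp add: field_simps)
  also have tb: "b powr (k + 1) = t * b"
    using b by (simp add: t powr_add)
  finally have young: "s * b \<le> chi k s + t * b / (k + 1)" .
  have "t powr (1 + 1/k) = b powr (k * (1 + 1/k))"
    using b by (simp add: t powr_powr)
  also have "k * (1 + 1/k) = k + 1"
    using k by (simp add: field_simps)
  finally have "chi k t = k / (k + 1) * (t * b)"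
    unfolding chi_def using tb by simp
  also have "\<dots> = t * b - t * b / (k + 1)"
    using k by (simp add: field_simps)
  finally have chi_t: "chi k t = t * b - t * b / (k + 1)" .
  have "s + a * t - (t + a * s) = s * b - t * b"
    by (simp add: b_def algebra_simps)
  then show ?thesis
    using young chi_t by linarith
qed

definition particle_energy :: "'a::real_normed_vector \<Rightarrow> real" where
  "particle_energy v = sqrt (1 + (norm v)\<^sup>2)"

lemma particle_energy_ge_1: "1 \<le> particle_energy v"
  unfolding particle_energy_def by simp

lemma particle_energy_pos: "0 < particle_energy v"
  using particle_energy_ge_1[of v] by simp

lemma norm_le_particle_energy: "norm v \<le> particle_energy v"
  unfolding particle_energy_def by (simp add: real_le_rsqrt)

lemma particle_energy_le: "particle_energy v \<le> 1 + norm v"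
  unfolding particle_energy_def
  by (rule real_le_lsqrt) (auto simp: power2_eq_square algebra_simps)

lemma borel_measurable_particle_energy[measurable]:
  "(particle_energy :: 'a::euclidean_space \<Rightarrow> real) \<in> borel_measurable borel"
  unfolding particle_energy_def by measurable

definition profile :: "real \<Rightarrow> real \<Rightarrow> 'a::real_normed_vector \<Rightarrow> real" where
  "profile k c v = (max 0 (1 - c * particle_energy v)) powr k"

lemma profile_nonneg: "0 \<le> profile k c v"
  unfolding profile_def by simp

lemma profile_le_1:
  assumes "0 < k" "0 \<le> c"
  shows "profile k c v \<le> 1"
proof -
  have "max 0 (1 - c * particle_energy v) \<le> 1"
    using assms particle_energy_pos[of v] by simp
  then show ?thesis
    unfolding profile_def using assms by (simp add: powr_le1)
qed

lemma profile_eq_0: "1 \<le> c * particle_energy v \<Longrightarrow> profile k c v = 0"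
  unfolding profile_def by simp

lemma profile_antimono:
  assumes "0 < k" "c \<le> c'"
  shows "profile k c' v \<le> profile k c v"
proof -
  have "c * particle_energy v \<le> c' * particle_energy v"
    using assms particle_energy_pos[of v] by (intro mult_right_mono) auto
  then show ?thesis
    unfolding profile_def using assms by (intro powr_mono2) auto
qed

lemma borel_measurable_profile[measurable (raw)]:
  fixes g :: "'b \<Rightarrow> 'a::euclidean_space"
  assumes [measurable]: "c \<in> borel_measurable M" "g \<in> borel_measurable M"
  shows "(\<lambda>x. profile k (c x) (g x)) \<in> borel_measurable M"
  unfolding profile_def by measurable

section \<open>Profiles with prescribed density\<close>

definition profile_density :: "real \<Rightarrow> real \<Rightarrow> ennreal" where
  "profile_density k c = (\<integral>\<^sup>+v. ennreal (particle_energy (v::real^3) * profile k c v) \<partial>lebesgue)"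

lemma profile_density_lborel:
  "profile_density k c = (\<integral>\<^sup>+v. ennreal (particle_energy (v::real^3) * profile k c v) \<partial>lborel)"
  unfolding profile_density_def by (simp add: nn_integral_completion)

lemma profile_density_antimono:
  assumes "0 < k" "c \<le> c'"
  shows "profile_density k c' \<le> profile_density k c"
  unfolding profile_density_def
  using profile_antimono[OF assms] particle_energy_pos
  by (intro nn_integral_mono ennreal_leI mult_left_mono) (auto intro: less_imp_le)

lemma profile_density_eq_0:
  assumes "1 \<le> c"
  shows "profile_density k c = 0"
proof -
  have "profile k c v = 0" for v :: "real^3"
    using assms mult_mono[OF assms particle_energy_ge_1[of v]] by (intro profile_eq_0) simp
  then show ?thesis
    unfolding profile_density_def by simp
qed

lemma profile_le_indicator_cball:
  assumes k: "0 < k" and c0: "0 < c0" "c0 \<le> c"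
  shows "ennreal (particle_energy v * profile k c v)
    \<le> ennreal (sqrt (1 + (1 / c0)\<^sup>2)) * indicator (cball 0 (1 / c0)) v"
proof (cases "norm v \<le> 1 / c0")
  case True
  have "particle_energy v \<le> sqrt (1 + (1 / c0)\<^sup>2)"
    unfolding particle_energy_def using True by (intro real_sqrt_le_mono add_left_mono power_mono) auto
  moreover have "profile k c v \<le> 1"
    using profile_le_1[OF k, of c v] c0 by simp
  ultimately have "particle_energy v * profile k c v \<le> sqrt (1 + (1 / c0)\<^sup>2)"
    using particle_energy_pos[of v] profile_nonneg[of k c v] mult_mono[of _ _ _ 1] by fastforce
  then show ?thesis
    using True by (simp add: ennreal_leI)
next
  case False
  then have "1 < c0 * norm v"
    using c0 by (simp add: field_simps)
  also have "\<dots> \<le> c0 * particle_energy v"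
    using norm_le_particle_energy[of v] c0 by (intro mult_left_mono) auto
  also have "\<dots> \<le> c * particle_energy v"
    using c0 particle_energy_pos[of v] by (intro mult_right_mono) auto
  finally show ?thesis
    by (simp add: profile_eq_0)
qed

lemma continuous_on_profile_density:
  assumes k: "0 < k" and c0: "0 < c0"
  shows "continuous_on {c0..} (profile_density k)"
proof (rule continuous_on_sequentiallyI)
  fix u :: "nat \<Rightarrow> real" and c assume u: "\<forall>n. u n \<in> {c0..}" and "c \<in> {c0..}" and lim: "u \<longlonglongrightarrow> c"
  define B where "B v = ennreal (sqrt (1 + (1 / c0)\<^sup>2)) * indicator (cball 0 (1 / c0)) v" for v :: "real^3"
  have "(\<lambda>n. \<integral>\<^sup>+v. ennreal (particle_energy (v::real^3) * profile k (u n) v) \<partial>lborel)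
      \<longlonglongrightarrow> (\<integral>\<^sup>+v. ennreal (particle_energy (v::real^3) * profile k c v) \<partial>lborel)"
  proof (rule nn_integral_dominated_convergence[where w = B])
    show "(\<lambda>v. ennreal (particle_energy v * profile k (u n) v)) \<in> borel_measurable lborel" for n
      by measurable
    show "(\<lambda>v. ennreal (particle_energy v * profile k c v)) \<in> borel_measurable lborel"
      by measurable
    have [measurable]: "cball (0::real^3) (1 / c0) \<in> sets borel"
      by simp
    show "B \<in> borel_measurable lborel"
      unfolding B_def by measurable
    show "AE v in lborel. ennreal (particle_energy v * profile k (u n) v) \<le> B v" for n
      using profile_le_indicator_cball[OF k c0] u by (auto simp: B_def)
    have "emeasure lborel (cball (0::real^3) (1 / c0)) < \<infinity>"
      by (rule emeasure_lborel_cball_finite)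
    then show "(\<integral>\<^sup>+v. B v \<partial>lborel) < \<infinity>"
      unfolding B_def by (subst nn_integral_cmult_indicator) (auto simp: ennreal_mult_less_top)
    show "AE v in lborel. (\<lambda>n. ennreal (particle_energy v * profile k (u n) v))
        \<longlonglongrightarrow> ennreal (particle_energy v * profile k c v)"
      unfolding profile_def using k
      by (intro AE_I2 tendsto_ennrealI tendsto_mult tendsto_const tendsto_powr' tendsto_max
          tendsto_diff lim) auto
  qed
  then show "(\<lambda>n. profile_density k (u n)) \<longlonglongrightarrow> profile_density k c"
    by (simp add: profile_density_lborel)
qed

lemma norm_le_of_mem_cube_cart:
  fixes v :: "real^'n" and t :: real
  assumes "v \<in> cbox (\<chi> i. - t) (\<chi> i. t)"
  shows "norm v \<le> real CARD('n) * t"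
proof -
  have "\<bar>v $ i\<bar> \<le> t" for i
    using assms unfolding mem_box_cart by (metis abs_le_iff minus_le_iff vec_lambda_beta)
  then have "(\<Sum>i\<in>UNIV. \<bar>v $ i\<bar>) \<le> (\<Sum>i\<in>(UNIV::'n set). t)"
    by (intro sum_mono) auto
  then show ?thesis
    using norm_le_l1_cart[of v] by simp
qed

lemma emeasure_cube_cart:
  fixes t :: real
  assumes "0 \<le> t"
  shows "emeasure lborel (cbox (\<chi> i. - t) (\<chi> i. t) :: (real^'n) set) = ennreal ((2 * t) ^ CARD('n))"
proof -
  have "(\<chi> i. - t) \<in> (cbox (\<chi> i. - t) (\<chi> i. t) :: (real^'n) set)"
    using assms by (simp add: mem_box_cart)
  then have "cbox (\<chi> i. - t) (\<chi> i. t) \<noteq> ({} :: (real^'n) set)"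
    by auto
  then show ?thesis
    by (simp add: emeasure_eq_measure2 content_cbox_cart)
qed

text \<open>On the cube \<open>[-t, t]\<^sup>3\<close> with \<open>t = 2 powr k\<close> the profile with \<open>c = 1 / (2 (1 + 3 t))\<close> is at
  least \<open>(1/2) powr k = 1 / t\<close>, while the cube has volume \<open>8 t\<^sup>3 \<ge> t\<close>.\<close>
lemma exists_profile_density_ge_1:
  assumes k: "0 < k"
  obtains c where "0 < c" "c \<le> 1" "1 \<le> profile_density k c"
proof
  define t where "t = 2 powr k"
  have t: "1 \<le> t"
    unfolding t_def using k by (intro ge_one_powr_ge_zero) auto
  define c where "c = 1 / (2 * (1 + 3 * t))"
  show "0 < c" "c \<le> 1"
    using t by (auto simp: c_def field_simps)
  define Q :: "(real^3) set" where "Q = cbox (\<chi> i. - t) (\<chi> i. t)"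
  have Q_sets: "Q \<in> sets lborel"
    by (simp add: Q_def)
  have lower: "ennreal ((1/2) powr k) * indicator Q v \<le> ennreal (particle_energy v * profile k c v)" for v
  proof (cases "v \<in> Q")
    case True
    then have "c * particle_energy v \<le> 1/2"
      using norm_le_of_mem_cube_cart[of v t] particle_energy_le[of v] t
      by (simp add: Q_def c_def field_simps)
    then have "(1/2) powr k \<le> profile k c v"
      unfolding profile_def using k by (intro powr_mono2) auto
    also have "\<dots> \<le> particle_energy v * profile k c v"
      using particle_energy_ge_1[of v] profile_nonneg[of k c v] mult_right_mono[of 1] by fastforce
    finally show ?thesis
      using True by (simp add: ennreal_leI)
  qed simp
  have "t \<le> t ^ 3"
    using power_increasing[of 1 3 t] t by simp
  then have "(1/2) powr k * t \<le> (1/2) powr k * (2 * t) ^ 3"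
    using t by (intro mult_left_mono) (auto simp: power_mult_distrib)
  moreover have "(1/2) powr k * t = 1"
    unfolding t_def using powr_mult[of "1/2" 2 k] by simp
  ultimately have "1 \<le> ennreal ((1/2) powr k) * emeasure lborel Q"
    using t emeasure_cube_cart[of t, where 'n = 3]
    by (simp add: Q_def ennreal_mult'[symmetric] ennreal_1[symmetric] del: ennreal_1)
  also have "\<dots> \<le> profile_density k c"
    unfolding profile_density_lborel
    using Q_sets by (subst nn_integral_cmult_indicator[symmetric]) (auto intro!: nn_integral_mono lower)
  finally show "1 \<le> profile_density k c" .
qed

lemma profile_density_attains:
  assumes k: "0 < k"
  obtains c0 where "0 < c0"
    and "\<And>r. 0 \<le> r \<Longrightarrow> r \<le> 1 \<Longrightarrow> \<exists>c. c0 \<le> c \<and> c \<le> 1 \<and> profile_density k c = ennreal r"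
proof -
  obtain c0 where c0: "0 < c0" "c0 \<le> 1" "1 \<le> profile_density k c0"
    using exists_profile_density_ge_1[OF k] .
  have cont: "continuous_on {c0..1} (profile_density k)"
    using continuous_on_profile_density[OF k c0(1)] by (rule continuous_on_subset) auto
  have "\<exists>c. c0 \<le> c \<and> c \<le> 1 \<and> profile_density k c = ennreal r" if "0 \<le> r" "r \<le> 1" for r
  proof (rule IVT2'[of "profile_density k" 1 _ c0])
    show "profile_density k 1 \<le> ennreal r"
      by (simp add: profile_density_eq_0)
    show "ennreal r \<le> profile_density k c0"
      using \<open>r \<le> 1\<close> c0(3) by (metis ennreal_le_1 order_trans)
  qed (use c0 cont in auto)
  with c0(1) show thesis
    by (rule that)
qed

text \<open>A monotone selection from the preimages provided by the intermediate value theorem;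
  monotonicity makes it Borel measurable.\<close>
lemma measurable_profile_density_inverse:
  assumes k: "0 < k"
  obtains C where "C \<in> borel_measurable borel" and "\<And>r. 0 < C r" and "\<And>r. C r \<le> 1"
    and "\<And>r. 0 \<le> r \<Longrightarrow> r \<le> 1 \<Longrightarrow> profile_density k (C r) = ennreal r"
proof -
  obtain c0 where c0: "0 < c0"
    and attains: "\<And>r. 0 \<le> r \<Longrightarrow> r \<le> 1 \<Longrightarrow> \<exists>c. c0 \<le> c \<and> c \<le> 1 \<and> profile_density k c = ennreal r"
    using profile_density_attains[OF k] by blast
  from attains obtain C
    where C: "\<And>r. 0 \<le> r \<Longrightarrow> r \<le> 1 \<Longrightarrow> c0 \<le> C r \<and> C r \<le> 1 \<and> profile_density k (C r) = ennreal r"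
    by metis
  define clamp where "clamp r = max 0 (min 1 r)" for r :: real
  have clamp: "0 \<le> clamp r" "clamp r \<le> 1" for r
    by (auto simp: clamp_def)
  have "antimono (\<lambda>r. C (clamp r))"
  proof (rule antimonoI)
    fix r1 r2 :: real assume "r1 \<le> r2"
    then have le: "clamp r1 \<le> clamp r2"
      by (auto simp: clamp_def)
    show "C (clamp r2) \<le> C (clamp r1)"
    proof (rule ccontr)
      assume "\<not> C (clamp r2) \<le> C (clamp r1)"
      then have "profile_density k (C (clamp r2)) \<le> profile_density k (C (clamp r1))"
        using k by (intro profile_density_antimono) auto
      then have "clamp r2 \<le> clamp r1"
        using C clamp by (simp add: ennreal_le_iff)
      then show False
        using le \<open>\<not> C (clamp r2) \<le> C (clamp r1)\<close> by (metis order_antisym order_refl)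
    qed
  qed
  then have "(\<lambda>r. - C (clamp r)) \<in> borel_measurable borel"
    by (intro borel_measurable_mono) (simp add: antimono_def monotone_def mono_def)
  then have "(\<lambda>r. C (clamp r)) \<in> borel_measurable borel"
    using borel_measurable_uminus[of "\<lambda>r. - C (clamp r)"] by simp
  moreover have "clamp r = r" if "0 \<le> r" "r \<le> 1" for r
    using that by (simp add: clamp_def)
  ultimately show thesis
  proof (intro that)
    show "0 < C (clamp r)" "C (clamp r) \<le> 1" for r
      using C[OF clamp] c0 by (auto intro: less_le_trans)
  qed (use C in auto)
qed

section \<open>Densities, masses and the metric coefficient\<close>

lemma borel_measurable_meas_density[measurable_dest]:
  "meas_density g \<Longrightarrow> (\<lambda>z. g (fst z) (snd z)) \<in> borel_measurable lebesgue"
  unfolding meas_density_def by simp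

lemma rho_eq_particle_energy:
  "rho g x = (\<integral>\<^sup>+v. ennreal (particle_energy v * g x v) \<partial>lebesgue)"
  unfolding rho_def particle_energy_def ..

lemma nn_integral_rho:
  fixes e :: "real^3 \<Rightarrow> ennreal"
  assumes g: "meas_density g" and e: "e \<in> borel_measurable lebesgue"
  shows "(\<integral>\<^sup>+z. ennreal (particle_energy (snd z) * g (fst z) (snd z)) * e (fst z) \<partial>lebesgue)
       = (\<integral>\<^sup>+x. rho g x * e x \<partial>lebesgue)"
proof -
  define F where "F z = ennreal (particle_energy (snd z) * g (fst z) (snd z))" for z :: "(real^3) \<times> (real^3)"
  have F: "F \<in> borel_measurable lebesgue"
    unfolding F_def using g by measurable
  have "(\<lambda>z. e (fst z)) \<in> borel_measurable (lebesgue :: ((real^3) \<times> (real^3)) measure)"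
    using measurable_compose[OF measurable_fst_lebesgue e] .
  then have "(\<integral>\<^sup>+z. F z * e (fst z) \<partial>lebesgue) = (\<integral>\<^sup>+x. (\<integral>\<^sup>+v. F (x, v) * e x \<partial>lebesgue) \<partial>lebesgue)"
    using F by (subst nn_integral_lebesgue_pair(1)) auto
  also have "\<dots> = (\<integral>\<^sup>+x. rho g x * e x \<partial>lebesgue)"
    using AE_measurable_section_lebesgue[OF F]
    by (intro nn_integral_cong_AE, eventually_elim)
      (simp add: nn_integral_multc rho_eq_particle_energy F_def)
  finally show ?thesis
    by (simp add: F_def)
qed

lemma borel_measurable_rho:
  assumes "meas_density g"
  shows "rho g \<in> borel_measurable lebesgue"
proof -
  have "(\<lambda>z. ennreal (particle_energy (snd z) * g (fst z) (snd z)))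
      \<in> borel_measurable (lebesgue :: ((real^3) \<times> (real^3)) measure)"
    using assms by measurable
  from nn_integral_lebesgue_pair(2)[OF this] show ?thesis
    by (simp add: rho_eq_particle_energy[abs_def])
qed

lemma total_mass_eq_integral_rho:
  "meas_density g \<Longrightarrow> total_mass g = (\<integral>\<^sup>+x. rho g x \<partial>lebesgue)"
  using nn_integral_rho[of g "\<lambda>_. 1"] by (simp add: total_mass_def particle_energy_def)

lemma mass_in_eq_integral_rho:
  assumes "meas_density g"
  shows "mass_in g r = (\<integral>\<^sup>+x. rho g x * indicator (cball 0 r) x \<partial>lebesgue)"
proof -
  have "indicator (cball (0::real^3) r) \<in> borel_measurable lebesgue"
    using lmeasurable_cball by (intro borel_measurable_indicator fmeasurableD)
  from nn_integral_rho[OF assms this] show ?thesis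
    by (simp add: mass_in_def particle_energy_def)
qed

lemma mass_in_mono: "r1 \<le> r2 \<Longrightarrow> mass_in g r1 \<le> mass_in g r2"
  unfolding mass_in_def
  by (intro nn_integral_mono mult_left_mono) (auto simp: indicator_def)

lemma mass_in_le_total_mass: "mass_in g r \<le> total_mass g"
  unfolding mass_in_def total_mass_def
  by (intro nn_integral_mono) (auto simp: indicator_def)

lemma rho_rotation_invariant:
  assumes g: "sph_sym g" and A: "orthogonal_matrix A" "det A = 1"
  shows "rho g (A *v x) = rho g x"
proof -
  have T: "orthogonal_transformation ((*v) A)"
    using A by (simp add: orthogonal_transformation_matrix)
  have "rho g (A *v x) = (\<integral>\<^sup>+v. ennreal (particle_energy (A *v v) * g (A *v x) (A *v v)) \<partial>lebesgue)"
    unfolding rho_eq_particle_energy by (rule nn_integral_lebesgue_orthogonal_transformation[OF T, symmetric])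
  also have "\<dots> = rho g x"
    using g A orthogonal_transformation_norm[OF T]
    by (simp add: rho_eq_particle_energy particle_energy_def sph_sym_def)
  finally show ?thesis .
qed

lemma borel_measurable_exp_lambda:
  assumes "total_mass g < \<infinity>"
  shows "exp_lambda g \<in> borel_measurable borel"
proof -
  have "mono (\<lambda>r. enn2real (mass_in g r))"
    using assms mass_in_le_total_mass[of g]
    by (intro monoI enn2real_mono mass_in_mono) (auto intro: le_less_trans)
  then have [measurable]: "(\<lambda>r. enn2real (mass_in g r)) \<in> borel_measurable borel"
    by (rule borel_measurable_mono)
  show ?thesis
    unfolding exp_lambda_def[abs_def] by measurable
qed

lemma exp_lambda_bounds:
  assumes mass: "\<forall>r>0. mass_in g r \<le> ennreal (\<beta> * r)" and \<beta>: "0 \<le> \<beta>" "\<beta> < 1/2" and r: "0 \<le> r"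
  shows "0 < exp_lambda g r" and "exp_lambda g r \<le> 1 / sqrt (1 - 2 * \<beta>)"
proof -
  have sqrt_\<beta>: "0 < sqrt (1 - 2 * \<beta>)" "sqrt (1 - 2 * \<beta>) \<le> 1"
    using \<beta> by auto
  have "0 < exp_lambda g r \<and> exp_lambda g r \<le> 1 / sqrt (1 - 2 * \<beta>)"
  proof (cases "r = 0")
    case True
    then show ?thesis
      using sqrt_\<beta> by (simp add: exp_lambda_def field_simps)
  next
    case False
    then have "0 < r"
      using r by simp
    then have "enn2real (mass_in g r) \<le> \<beta> * r"
      using mass \<beta> by (metis enn2real_ennreal enn2real_mono ennreal_less_top mult_nonneg_nonneg less_imp_le)
    then have "2 * enn2real (mass_in g r) / r \<le> 2 * \<beta>"
      using \<open>0 < r\<close> by (simp add: field_simps)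
    then have "sqrt (1 - 2 * \<beta>) \<le> sqrt (1 - 2 * enn2real (mass_in g r) / r)"
      by simp
    then show ?thesis
      using sqrt_\<beta> False by (simp add: exp_lambda_def divide_left_mono)
  qed
  then show "0 < exp_lambda g r" "exp_lambda g r \<le> 1 / sqrt (1 - 2 * \<beta>)"
    by auto
qed

lemma exp_lambda_eq_if_rho_eq:
  assumes "meas_density g" "meas_density h" "\<And>x. rho g x = rho h x"
  shows "exp_lambda g = exp_lambda h"
  using assms by (simp add: fun_eq_iff exp_lambda_def mass_in_eq_integral_rho)

lemma A_tilde_if_rho_eq:
  assumes f: "f \<in> A_tilde M \<beta>"
    and g: "meas_density g" "sph_sym g" "\<And>x v. 0 \<le> g x v" and rho: "\<And>x. rho g x = rho f x"
  shows "g \<in> A_tilde M \<beta>"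
proof -
  have "meas_density f"
    using f by (simp add: A_tilde_def)
  then show ?thesis
    using f g rho by (simp add: A_tilde_def mass_in_eq_integral_rho total_mass_eq_integral_rho)
qed

lemma nn_integral_weighted_le_total_mass:
  assumes g: "meas_density g" "\<And>x v. 0 \<le> g x v" and e: "\<And>x. 0 \<le> e x" "\<And>x. e x \<le> B"
  shows "(\<integral>\<^sup>+z. ennreal (e (fst z) * g (fst z) (snd z)) \<partial>lebesgue) \<le> ennreal B * total_mass g"
proof -
  have "(\<integral>\<^sup>+z. ennreal (e (fst z) * g (fst z) (snd z)) \<partial>lebesgue)
      \<le> (\<integral>\<^sup>+z. ennreal B * ennreal (particle_energy (snd z) * g (fst z) (snd z)) \<partial>lebesgue)"
  proof (rule nn_integral_mono)
    fix z :: "(real^3) \<times> (real^3)"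
    have "g (fst z) (snd z) \<le> particle_energy (snd z) * g (fst z) (snd z)"
      using mult_right_mono[OF particle_energy_ge_1 g(2)] by simp
    then have "e (fst z) * g (fst z) (snd z) \<le> B * (particle_energy (snd z) * g (fst z) (snd z))"
      using e g(2) by (intro mult_mono) (auto intro: order_trans)
    then show "ennreal (e (fst z) * g (fst z) (snd z))
        \<le> ennreal B * ennreal (particle_energy (snd z) * g (fst z) (snd z))"
      using e g(2) particle_energy_pos[of "snd z"] order_trans[OF e]
      by (simp add: ennreal_mult[symmetric] ennreal_leI)
  qed
  also have "\<dots> = ennreal B * total_mass g"
    using g(1) by (simp add: nn_integral_cmult total_mass_def particle_energy_def)
  finally show ?thesis .
qed

section \<open>Replacing a density by a profile\<close>

lemma meas_density_profile:
  assumes "c \<in> borel_measurable lebesgue"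
  shows "meas_density (\<lambda>x v. profile k (c x) v)"
proof -
  have [measurable]: "(\<lambda>z. c (fst z)) \<in> borel_measurable (lebesgue :: ((real^3) \<times> (real^3)) measure)"
    using measurable_compose[OF measurable_fst_lebesgue assms] .
  show ?thesis
    unfolding meas_density_def by measurable
qed

lemma rho_profile: "rho (\<lambda>x v. profile k (c x) v) x = profile_density k (c x)"
  by (simp add: rho_eq_particle_energy profile_density_def)

lemma sph_sym_profile:
  assumes "\<And>A x. orthogonal_matrix A \<Longrightarrow> det A = 1 \<Longrightarrow> c (A *v x) = c x"
  shows "sph_sym (\<lambda>x v. profile k (c x) v)"
  unfolding sph_sym_def
proof (intro allI impI)
  fix A :: "real^3^3" and x v assume A: "orthogonal_matrix A \<and> det A = 1"
  then have "norm (A *v v) = norm v"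
    by (intro orthogonal_transformation_norm) (simp add: orthogonal_transformation_matrix)
  then show "profile k (c (A *v x)) (A *v v) = profile k (c x) v"
    using assms A by (simp add: profile_def particle_energy_def)
qed

lemma exists_profile_with_rho:
  assumes k: "0 < k" and f: "meas_density f" "sph_sym f" "\<And>x. rho f x \<le> 1"
  obtains c where "c \<in> borel_measurable lebesgue" "\<And>x. 0 < c x" "\<And>x. c x \<le> 1"
    and "\<And>x. rho (\<lambda>x v. profile k (c x) v) x = rho f x" and "sph_sym (\<lambda>x v. profile k (c x) v)"
proof -
  obtain C where C_meas: "C \<in> borel_measurable borel" and C: "\<And>r. 0 < C r" "\<And>r. C r \<le> 1"
    and C_inverse: "\<And>r. 0 \<le> r \<Longrightarrow> r \<le> 1 \<Longrightarrow> profile_density k (C r) = ennreal r"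
    using measurable_profile_density_inverse[OF k] by blast
  define c where "c x = C (enn2real (rho f x))" for x
  show thesis
  proof (rule that)
    have [measurable]: "rho f \<in> borel_measurable lebesgue"
      using f(1) by (rule borel_measurable_rho)
    show "c \<in> borel_measurable lebesgue"
      unfolding c_def using C_meas by measurable
    show "0 < c x" "c x \<le> 1" for x
      using C by (simp_all add: c_def)
    have "rho f x < \<infinity>" for x
      using f(3)[of x] by (simp add: le_less_trans)
    then show "rho (\<lambda>x v. profile k (c x) v) x = rho f x" for x
      using f(3)[of x] by (simp add: rho_profile c_def C_inverse enn2real_leI)
    show "sph_sym (\<lambda>x v. profile k (c x) v)"
      using f(2) by (intro sph_sym_profile) (simp add: c_def rho_rotation_invariant)
  qed
qed

lemma ennreal_chi_profile_le:
  fixes k c s e :: real and v :: "'a::real_normed_vector"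
  defines "t \<equiv> profile k c v"
  assumes k: "0 < k" and s: "0 \<le> s" and c: "0 < c" and e: "0 \<le> e"
  shows "ennreal (e * chi k t) + ennreal (e * s) + ennreal (particle_energy v * t) * ennreal (e * c)
    \<le> ennreal (e * chi k s) + ennreal (e * t) + ennreal (particle_energy v * s) * ennreal (e * c)"
proof -
  have "0 < c * particle_energy v"
    using c particle_energy_pos by (rule mult_pos_pos)
  from chi_profile_le[OF k s this]
  have "chi k t + s + c * particle_energy v * t \<le> chi k s + t + c * particle_energy v * s"
    by (simp add: t_def profile_def)
  from mult_left_mono[OF this e]
  have "ennreal (e * chi k t + e * s + particle_energy v * t * (e * c))
      \<le> ennreal (e * chi k s + e * t + particle_energy v * s * (e * c))"
    by (intro ennreal_leI) (simp add: algebra_simps)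
  moreover have "0 \<le> e * chi k t" "0 \<le> e * s" "0 \<le> particle_energy v * t"
    "0 \<le> e * chi k s" "0 \<le> e * t" "0 \<le> particle_energy v * s"
    "0 \<le> particle_energy v * t * (e * c)" "0 \<le> particle_energy v * s * (e * c)"
    using e s k c particle_energy_pos[of v]
    by (auto simp: t_def intro!: mult_nonneg_nonneg chi_nonneg profile_nonneg)
  ultimately show ?thesis
    by (simp add: ennreal_mult'[symmetric] flip: ennreal_plus del: ennreal_plus)
qed

lemma nn_integral_chi_profile_le:
  fixes k :: real and e c :: "real^3 \<Rightarrow> real" and g :: "real^3 \<Rightarrow> real^3 \<Rightarrow> real"
  defines "h \<equiv> \<lambda>x v. profile k (c x) v"
  assumes k: "0 < k" and g: "meas_density g" "\<And>x v. 0 \<le> g x v" and rho: "\<And>x. rho h x = rho g x"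
    and c: "c \<in> borel_measurable lebesgue" "\<And>x. 0 < c x"
    and e: "e \<in> borel_measurable lebesgue" "\<And>x. 0 \<le> e x"
    and finite: "(\<integral>\<^sup>+x. rho g x * ennreal (e x * c x) \<partial>lebesgue) < \<infinity>"
  shows "(\<integral>\<^sup>+z. ennreal (e (fst z) * chi k (h (fst z) (snd z))) \<partial>lebesgue)
           + (\<integral>\<^sup>+z. ennreal (e (fst z) * g (fst z) (snd z)) \<partial>lebesgue)
         \<le> (\<integral>\<^sup>+z. ennreal (e (fst z) * chi k (g (fst z) (snd z))) \<partial>lebesgue)
           + (\<integral>\<^sup>+z. ennreal (e (fst z) * h (fst z) (snd z)) \<partial>lebesgue)"
    (is "?A h + ?B g \<le> ?A g + ?B h")
proof -
  have h: "meas_density h"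
    unfolding h_def using c(1) by (rule meas_density_profile)
  have [measurable]: "(\<lambda>z. e (fst z)) \<in> borel_measurable (lebesgue :: ((real^3) \<times> (real^3)) measure)"
    "(\<lambda>z. c (fst z)) \<in> borel_measurable (lebesgue :: ((real^3) \<times> (real^3)) measure)"
    "(\<lambda>z. h (fst z) (snd z)) \<in> borel_measurable lebesgue"
    using measurable_compose[OF measurable_fst_lebesgue] e(1) c(1) h
    by (auto simp: meas_density_def)
  define K where "K u = (\<integral>\<^sup>+z. ennreal (particle_energy (snd z) * u (fst z) (snd z))
      * ennreal (e (fst z) * c (fst z)) \<partial>lebesgue)" for u :: "real^3 \<Rightarrow> real^3 \<Rightarrow> real"
  have K_rho: "K u = (\<integral>\<^sup>+x. rho u x * ennreal (e x * c x) \<partial>lebesgue)" if "meas_density u" for u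
    unfolding K_def using that e(1) c(1) by (intro nn_integral_rho) measurable
  have "?A h + ?B g + K h = (\<integral>\<^sup>+z. ennreal (e (fst z) * chi k (h (fst z) (snd z)))
      + ennreal (e (fst z) * g (fst z) (snd z))
      + ennreal (particle_energy (snd z) * h (fst z) (snd z)) * ennreal (e (fst z) * c (fst z)) \<partial>lebesgue)"
    using g(1) by (simp add: K_def nn_integral_add)
  also have "\<dots> \<le> (\<integral>\<^sup>+z. ennreal (e (fst z) * chi k (g (fst z) (snd z)))
      + ennreal (e (fst z) * h (fst z) (snd z))
      + ennreal (particle_energy (snd z) * g (fst z) (snd z)) * ennreal (e (fst z) * c (fst z)) \<partial>lebesgue)"
    using k g(2) c(2) e(2) unfolding h_def by (intro nn_integral_mono ennreal_chi_profile_le) auto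
  also have "\<dots> = ?A g + ?B h + K g"
    using g(1) by (simp add: K_def nn_integral_add)
  also have "K h = K g"
    using K_rho[OF h] K_rho[OF g(1)] rho by simp
  finally have "K g + (?A h + ?B g) \<le> K g + (?A g + ?B h)"
    by (simp add: ac_simps)
  moreover have "K g < \<infinity>"
    using K_rho[OF g(1)] finite by simp
  ultimately show ?thesis
    by (auto simp: ennreal_add_left_cancel_le)
qed

lemma enn2ereal_diff_le_diff:
  fixes a a' b b' :: ennreal
  assumes le: "a + b' \<le> a' + b" and b: "b < \<infinity>" and b': "b' < \<infinity>"
  shows "enn2ereal a - enn2ereal b \<le> enn2ereal a' - enn2ereal b'"
proof (cases "a' = \<infinity>")
  case True
  then show ?thesis
    using b' by (cases b' rule: ennreal_cases) auto
next
  case False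
  then have "a' + b < \<infinity>"
    using b by (simp add: less_top[symmetric])
  then have "a + b' < \<infinity>"
    using le by (rule le_less_trans[rotated])
  then have "a < \<infinity>"
    by simp
  then show ?thesis
    using le b b' False
    by (cases a rule: ennreal_cases; cases a' rule: ennreal_cases; cases b rule: ennreal_cases;
        cases b' rule: ennreal_cases) (auto simp flip: ennreal_plus)
qed

lemma Dfun_le_DfunI:
  fixes g h :: "real^3 \<Rightarrow> real^3 \<Rightarrow> real"
  defines "E \<equiv> \<lambda>x. exp_lambda g (norm x)"
  assumes "exp_lambda h = exp_lambda g"
    and "(\<integral>\<^sup>+z. ennreal (E (fst z) * chi k (h (fst z) (snd z))) \<partial>lebesgue)
           + (\<integral>\<^sup>+z. ennreal (E (fst z) * g (fst z) (snd z)) \<partial>lebesgue)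
         \<le> (\<integral>\<^sup>+z. ennreal (E (fst z) * chi k (g (fst z) (snd z))) \<partial>lebesgue)
           + (\<integral>\<^sup>+z. ennreal (E (fst z) * h (fst z) (snd z)) \<partial>lebesgue)"
    and "(\<integral>\<^sup>+z. ennreal (E (fst z) * h (fst z) (snd z)) \<partial>lebesgue) < \<infinity>"
    and "(\<integral>\<^sup>+z. ennreal (E (fst z) * g (fst z) (snd z)) \<partial>lebesgue) < \<infinity>"
  shows "Dfun k h \<le> Dfun k g"
  unfolding Dfun_def using assms by (intro enn2ereal_diff_le_diff) simp_all

lemma nn_integral_rho_bounded_weight_finite:
  assumes g: "meas_density g" "total_mass g < \<infinity>" and w: "\<And>x. w x \<le> B"
  shows "(\<integral>\<^sup>+x. rho g x * ennreal (w x) \<partial>lebesgue) < \<infinity>"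
proof -
  have "(\<integral>\<^sup>+x. rho g x * ennreal (w x) \<partial>lebesgue) \<le> (\<integral>\<^sup>+x. rho g x * ennreal B \<partial>lebesgue)"
    using w by (intro nn_integral_mono mult_left_mono ennreal_leI) auto
  also have "\<dots> = total_mass g * ennreal B"
    using g(1) by (simp add: nn_integral_multc borel_measurable_rho total_mass_eq_integral_rho)
  finally show ?thesis
    using g(2) by (simp add: le_less_trans ennreal_mult_less_top)
qed

lemma Dfun_profile_le:
  assumes k: "0 < k" and \<beta>: "0 \<le> \<beta>" "\<beta> < 1/2" and f: "f \<in> A_tilde M \<beta>" "\<And>x v. 0 \<le> f x v"
    and c: "c \<in> borel_measurable lebesgue" "\<And>x. 0 < c x" "\<And>x. c x \<le> 1"
    and rho: "\<And>x. rho (\<lambda>x v. profile k (c x) v) x = rho f x"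
  shows "Dfun k (\<lambda>x v. profile k (c x) v) \<le> Dfun k f"
proof -
  define h :: "real^3 \<Rightarrow> real^3 \<Rightarrow> real" where "h = (\<lambda>x v. profile k (c x) v)"
  from f(1) have f_meas: "meas_density f" and mass: "\<forall>r>0. mass_in f r \<le> ennreal (\<beta> * r)"
    and total: "total_mass f = ennreal M"
    by (auto simp: A_tilde_def)
  have h_meas: "meas_density h"
    unfolding h_def using c(1) by (rule meas_density_profile)
  have h_nonneg: "\<And>x v. 0 \<le> h x v" and rho_h: "\<And>x. rho h x = rho f x"
    using rho by (simp_all add: h_def profile_nonneg)
  have total_h: "total_mass h = ennreal M"
    using total rho_h f_meas h_meas by (simp add: total_mass_eq_integral_rho)
  define E where "E x = exp_lambda f (norm x)" for x :: "real^3"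
  define Emax where "Emax = 1 / sqrt (1 - 2 * \<beta>)"
  have E: "0 \<le> E x" "E x \<le> Emax" for x
    using exp_lambda_bounds[OF mass \<beta>, of "norm x"] by (auto simp: E_def Emax_def)
  have [measurable]: "exp_lambda f \<in> borel_measurable borel"
    using total by (intro borel_measurable_exp_lambda) simp
  have E_meas: "E \<in> borel_measurable lebesgue"
    unfolding E_def by (intro measurable_completion) measurable
  have "E x * c x \<le> Emax" for x
    using mult_right_le_one_le[of "E x" "c x"] E[of x] c(2,3)[of x] by linarith
  then have finite: "(\<integral>\<^sup>+x. rho f x * ennreal (E x * c x) \<partial>lebesgue) < \<infinity>"
    using f_meas total by (intro nn_integral_rho_bounded_weight_finite) auto
  have finite_weighted: "(\<integral>\<^sup>+z. ennreal (E (fst z) * u (fst z) (snd z)) \<partial>lebesgue) < \<infinity>"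
    if "meas_density u" "\<And>x v. 0 \<le> u x v" "total_mass u = ennreal M" for u
    using nn_integral_weighted_le_total_mass[of u E Emax, OF that(1,2) E] that(3)
    by (simp add: le_less_trans ennreal_mult_less_top)
  have "Dfun k h \<le> Dfun k f"
  proof (rule Dfun_le_DfunI)
    show "exp_lambda h = exp_lambda f"
      using h_meas f_meas rho_h by (rule exp_lambda_eq_if_rho_eq)
  qed (unfold E_def[symmetric] h_def,
      fact nn_integral_chi_profile_le[OF k f_meas f(2) rho c(1,2) E_meas E(1) finite],
      fact finite_weighted[OF h_meas h_nonneg total_h, unfolded h_def],
      fact finite_weighted[OF f_meas f(2) total])
  then show ?thesis
    by (simp add: h_def)
qed

theorem lemma3p1:
  fixes k M \<beta> :: real and f :: "real^3 \<Rightarrow> real^3 \<Rightarrow> real"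
  assumes "k > 0" and "M > 0" and "0 < \<beta>" and "\<beta> < 1/2"
    and "sph_sym f" and "\<forall>x v. 0 \<le> f x v"
    and "f \<in> A_tilde M \<beta>"
  shows "\<exists>fh :: real^3 \<Rightarrow> real^3 \<Rightarrow> real.
           meas_density fh \<and> sph_sym fh \<and> (\<forall>x v. 0 \<le> fh x v) \<and>
           (\<forall>x. rho fh x = rho f x) \<and> fh \<in> A_tilde M \<beta> \<and>
           Dfun k fh \<le> Dfun k f \<and>
           (\<forall>x v. fh x v \<le> 1)"
proof -
  have f_meas: "meas_density f" and rho_le_1: "\<And>x. rho f x \<le> 1"
    using assms(7) by (auto simp: A_tilde_def)
  obtain c where c: "c \<in> borel_measurable lebesgue" "\<And>x. 0 < c x" "\<And>x. c x \<le> 1"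
    and rho: "\<And>x. rho (\<lambda>x v. profile k (c x) v) x = rho f x"
    and sym: "sph_sym (\<lambda>x v. profile k (c x) v)"
    using exists_profile_with_rho[OF assms(1) f_meas assms(5) rho_le_1] by blast
  define fh :: "real^3 \<Rightarrow> real^3 \<Rightarrow> real" where "fh = (\<lambda>x v. profile k (c x) v)"
  have fh_meas: "meas_density fh"
    unfolding fh_def using c(1) by (rule meas_density_profile)
  have fh_nonneg: "\<And>x v. 0 \<le> fh x v" and fh_le_1: "\<And>x v. fh x v \<le> 1"
    using profile_le_1[OF assms(1) less_imp_le[OF c(2)]] by (simp_all add: fh_def profile_nonneg)
  have rho_fh: "\<And>x. rho fh x = rho f x" and sym_fh: "sph_sym fh"
    using rho sym by (simp_all add: fh_def)
  have "fh \<in> A_tilde M \<beta>"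
    using assms(7) fh_meas sym_fh fh_nonneg rho_fh by (rule A_tilde_if_rho_eq)
  moreover have "Dfun k fh \<le> Dfun k f"
    unfolding fh_def
    using assms(1,3,4,7) assms(6)[rule_format] c rho by (intro Dfun_profile_le) auto
  ultimately show ?thesis
    using fh_meas sym_fh fh_nonneg rho_fh fh_le_1 by blast
qed

end
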